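(* Let $\mathcal A=\{a_1,\dots,a_n\}\subset\mathbb Z^d$ with $n\ge d+2$ and $d$-dimensional convex hull. Let $\Delta_1,\dots,\Delta_p$ ($p\ge1$) be $d$-simplices of $\mathcal A$ which all occur in some (common) regular subdivision of $\mathcal A$, and let $I_k$ be the index set of the vertices of $\Delta_k$, $k=1,\dots,p$. Then the cone $\mathcal C_{\Delta_1,\dots,\Delta_p}$ of all height vectors $h\in\mathbb R^n$ inducing a regular subdivision of $\mathcal A$ containing $\Delta_1,\dots,\Delta_p$ is a nonempty open polyhedral cone defined by the linear inequalities \[ \langle d_{I_k}\cdot m^{I_k}_i,h\rangle>0\quad\text{for all }k=1,\dots,p\text{ and all } i\notin I_k, \] and the vectors $\{d_{I_k}\cdot m^{I_k}_i:\ k=1,\dots,p,\ i\notin I_k\}$ generate the kernel of $A$.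
   Context: Let $A\in\mathbb Z^{(d+1)\times n}$ be the matrix whose $j$-th column is $(1,a_j)^t$, and for $h\in\mathbb R^n$ let $A_h$ be $A$ with the extra last row $h$. A $d$-simplex of $\mathcal A$ is a subset of $d+1$ affinely independent points. For an index set $I=\{i_1<\dots<i_{d+1}\}$ of a $d$-simplex, $d_I$ is the determinant of the columns of $A$ indexed by $I$; for $i\notin I$, $d_{I\cup\{i\}}(h)$ is the determinant of the columns of $A_h$ indexed by $I\cup\{i\}$ times the sign of the permutation sending the increasingly ordered $I\cup\{i\}$ to $(i_1,\dots,i_{d+1},i)$, and $m^I_i\in\mathbb R^n$ is the vector with $d_{I\cup\{i\}}(h)=\langle m^I_i,h\rangle$ for all $h$. Regular subdivisions: for $h\in\mathbb R^n$, lift $a_j$ to $(a_j,h_j)$; lower faces of the convex hull of the lifted points are faces with an inner normal having positive last coordinate; each lower face $F$ gives the cell $\{a_j:(a_j,h_j)\in F\}$, and the collection of cells is the regular subdivision induced by $h$. A simplex occurs in / is contained in a subdivision if it is one of its cells. *)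

theory Defs
  imports Complex_Main "Jordan_Normal_Form.Determinant"
begin

(* Conventions: the points a_1..a_n are indexed 0..n-1; a point a j :: nat => int
   has coordinates a j 0, ..., a j (d-1) (values at r >= d are irrelevant).
   Vectors of R^n are functions nat => real considered on {0..<n}. *)

definition Amat :: "(nat \<Rightarrow> nat \<Rightarrow> int) \<Rightarrow> nat \<Rightarrow> nat \<Rightarrow> real" where
  "Amat a r j = (if r = 0 then 1 else real_of_int (a j (r - 1)))"

definition Ahmat :: "(nat \<Rightarrow> nat \<Rightarrow> int) \<Rightarrow> nat \<Rightarrow> (nat \<Rightarrow> real) \<Rightarrow> nat \<Rightarrow> nat \<Rightarrow> real" where
  "Ahmat a d h r j = (if r \<le> d then Amat a r j else h j)"

definition aff_indep :: "(nat \<Rightarrow> nat \<Rightarrow> int) \<Rightarrow> nat \<Rightarrow> nat set \<Rightarrow> bool" where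
  "aff_indep a d I \<longleftrightarrow>
     (\<forall>c :: nat \<Rightarrow> real. (\<Sum>i\<in>I. c i) = 0 \<and> (\<forall>r<d. (\<Sum>i\<in>I. c i * real_of_int (a i r)) = 0)
        \<longrightarrow> (\<forall>i\<in>I. c i = 0))"

definition is_simplex :: "(nat \<Rightarrow> nat \<Rightarrow> int) \<Rightarrow> nat \<Rightarrow> nat \<Rightarrow> nat set \<Rightarrow> bool" where
  "is_simplex a n d I \<longleftrightarrow> I \<subseteq> {0..<n} \<and> card I = d + 1 \<and> aff_indep a d I"

definition full_dim :: "(nat \<Rightarrow> nat \<Rightarrow> int) \<Rightarrow> nat \<Rightarrow> nat \<Rightarrow> bool" where
  "full_dim a n d \<longleftrightarrow> (\<exists>I. is_simplex a n d I)"

definition dI :: "(nat \<Rightarrow> nat \<Rightarrow> int) \<Rightarrow> nat \<Rightarrow> nat set \<Rightarrow> real" where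
  "dI a d I = det (mat (d + 1) (d + 1)
      (\<lambda>(r, c). Amat a r (sorted_list_of_set I ! c)))"

text \<open>d_{I \<union> {i}}(h): determinant of the columns of A_h taken in the order
  (i_1, ..., i_{d+1}, i); this equals the determinant with increasingly ordered
  columns times the sign of the permutation sorting -> (i_1,...,i_{d+1},i).\<close>
definition dIi :: "(nat \<Rightarrow> nat \<Rightarrow> int) \<Rightarrow> nat \<Rightarrow> nat set \<Rightarrow> nat \<Rightarrow> (nat \<Rightarrow> real) \<Rightarrow> real" where
  "dIi a d I i h = det (mat (d + 2) (d + 2)
      (\<lambda>(r, c). Ahmat a d h r ((sorted_list_of_set I @ [i]) ! c)))"

definition ip :: "nat \<Rightarrow> (nat \<Rightarrow> real) \<Rightarrow> (nat \<Rightarrow> real) \<Rightarrow> real" where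
  "ip n x y = (\<Sum>j<n. x j * y j)"

definition in_Rn :: "nat \<Rightarrow> (nat \<Rightarrow> real) \<Rightarrow> bool" where
  "in_Rn n x \<longleftrightarrow> (\<forall>j\<ge>n. x j = 0)"

definition mIi :: "(nat \<Rightarrow> nat \<Rightarrow> int) \<Rightarrow> nat \<Rightarrow> nat \<Rightarrow> nat set \<Rightarrow> nat \<Rightarrow> (nat \<Rightarrow> real)" where
  "mIi a n d I i = (THE m. in_Rn n m \<and> (\<forall>h. dIi a d I i h = ip n m h))"

text \<open>Cells of the regular subdivision induced by h (as index sets): for every lower
  face F of the convex hull of the lifted points (a_j, h_j), i.e. a face with inner
  normal (c, t), t > 0 (the set where the linear functional attains its minimum),
  the cell {j. (a_j,h_j) \<in> F}.\<close>
definition reg_subdiv :: "(nat \<Rightarrow> nat \<Rightarrow> int) \<Rightarrow> nat \<Rightarrow> nat \<Rightarrow> (nat \<Rightarrow> real) \<Rightarrow> nat set set" where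
  "reg_subdiv a n d h =
     {J. \<exists>(c :: nat \<Rightarrow> real) (t :: real). t > 0 \<and>
          J = {j. j < n \<and> (\<forall>k<n.
                 (\<Sum>r<d. c r * real_of_int (a j r)) + t * h j
               \<le> (\<Sum>r<d. c r * real_of_int (a k r)) + t * h k)}}"

definition kerA :: "(nat \<Rightarrow> nat \<Rightarrow> int) \<Rightarrow> nat \<Rightarrow> nat \<Rightarrow> (nat \<Rightarrow> real) set" where
  "kerA a n d = {x. in_Rn n x \<and> (\<forall>r\<le>d. (\<Sum>j<n. Amat a r j * x j) = 0)}"

end

theory Submission
  imports Defs
begin

(* Expanding d_{I+i}(h) along its last row shows that m^I_i is supported on I and i, has entry
   d_I at i, and is orthogonal to the rows of A (a determinant with two equal rows).  Hence if
   the affine function l interpolates h on the simplex I, then <d_I m^I_i, h> = d_I^2 (h_i - l(a_i)).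
   On the other hand I is a cell of the subdivision induced by h iff some affine function agrees
   with h on I and lies strictly below h at all other points, so the cell condition is exactly the
   positivity of these numbers.  The vectors lie in ker A, and conversely x in ker A equals
   sum_{i notin I} (x_i / d_I) m^I_i: the difference lies in ker A and is supported on the affinely
   independent set I, hence vanishes. *)

definition simplex_mat :: "(nat \<Rightarrow> nat \<Rightarrow> int) \<Rightarrow> nat \<Rightarrow> nat set \<Rightarrow> real mat" where
  "simplex_mat a d I = mat (d + 1) (d + 1) (\<lambda>(r, c). Amat a r (sorted_list_of_set I ! c))"

definition lifted_mat ::
    "(nat \<Rightarrow> nat \<Rightarrow> int) \<Rightarrow> nat \<Rightarrow> nat set \<Rightarrow> nat \<Rightarrow> (nat \<Rightarrow> real) \<Rightarrow> real mat" where
  "lifted_mat a d I i h =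
     mat (d + 2) (d + 2) (\<lambda>(r, c). Ahmat a d h r ((sorted_list_of_set I @ [i]) ! c))"

definition affine_at :: "(nat \<Rightarrow> nat \<Rightarrow> int) \<Rightarrow> nat \<Rightarrow> (nat \<Rightarrow> real) \<Rightarrow> nat \<Rightarrow> real" where
  "affine_at a d l j = (\<Sum>r<d + 1. l r * Amat a r j)"

lemma affine_at_eq: "affine_at a d l j = l 0 + (\<Sum>r<d. l (Suc r) * real_of_int (a j r))"
  by (simp add: affine_at_def Amat_def sum.lessThan_Suc_shift del: sum.lessThan_Suc)

lemma ip_scale_left: "ip n (\<lambda>j. c * m j) h = c * ip n m h"
  by (simp add: ip_def sum_distrib_left mult.assoc)

lemma ip_diff_right: "ip n m (\<lambda>j. f j - g j) = ip n m f - ip n m g"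
  by (simp add: ip_def algebra_simps sum_subtractf)

lemma ip_indicator_right: "j < n \<Longrightarrow> ip n m (\<lambda>k. if k = j then 1 else 0) = m j"
  by (simp add: ip_def if_distrib cong: if_cong)

lemma reg_subdiv_truncate: "reg_subdiv a n d (\<lambda>j. if j < n then h j else 0) = reg_subdiv a n d h"
proof -
  have "{j. j < n \<and> (\<forall>k<n. (\<Sum>r<d. c r * real_of_int (a j r)) + t * (if j < n then h j else 0)
                            \<le> (\<Sum>r<d. c r * real_of_int (a k r)) + t * (if k < n then h k else 0))}
      = {j. j < n \<and> (\<forall>k<n. (\<Sum>r<d. c r * real_of_int (a j r)) + t * h j
                            \<le> (\<Sum>r<d. c r * real_of_int (a k r)) + t * h k)}" for c t
    by auto
  then show ?thesis unfolding reg_subdiv_def by simp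
qed

lemma in_Rn_eqI:
  assumes "in_Rn n m" "in_Rn n m'" "\<And>h. ip n m h = ip n m' h"
  shows "m = m'"
proof
  fix j
  show "m j = m' j"
  proof (cases "j < n")
    case True
    then show ?thesis
      using assms(3)[of "\<lambda>k. if k = j then 1 else 0"] by (simp add: ip_indicator_right)
  qed (use assms(1,2) in \<open>simp add: in_Rn_def\<close>)
qed

subsection \<open>The vectors m^I_i\<close>

lemma mIi_eqI:
  assumes "in_Rn n m" "\<And>h. dIi a d I i h = ip n m h"
  shows "mIi a n d I i = m"
  unfolding mIi_def
proof (rule the_equality)
  show "in_Rn n m \<and> (\<forall>h. dIi a d I i h = ip n m h)" using assms by simp
next
  fix m' assume m': "in_Rn n m' \<and> (\<forall>h. dIi a d I i h = ip n m' h)"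
  show "m' = m"
  proof (rule in_Rn_eqI)
    show "ip n m' h = ip n m h" for h using m' assms(2)[of h] by simp
  qed (use m' assms(1) in simp_all)
qed

lemma lifted_column:
  assumes "finite I" "card I = d + 1" "c < d + 2"
  shows "(sorted_list_of_set I @ [i]) ! c \<in> insert i I"
    and "i \<notin> I \<Longrightarrow> (sorted_list_of_set I @ [i]) ! c = i \<longleftrightarrow> c = d + 1"
proof -
  have "sorted_list_of_set I ! c \<in> I" if "c < d + 1"
    using assms(1,2) that by (metis length_sorted_list_of_set nth_mem set_sorted_list_of_set)
  then show "(sorted_list_of_set I @ [i]) ! c \<in> insert i I"
    and "i \<notin> I \<Longrightarrow> (sorted_list_of_set I @ [i]) ! c = i \<longleftrightarrow> c = d + 1"
    using assms(2,3) by (auto simp: nth_append)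
qed

lemma dIi_laplace_last_row:
  "dIi a d I i h = (\<Sum>c<d + 2. h ((sorted_list_of_set I @ [i]) ! c)
                       * cofactor (lifted_mat a d I i (\<lambda>_. 0)) (d + 1) c)"
proof -
  have "dIi a d I i h = det (lifted_mat a d I i h)"
    unfolding dIi_def lifted_mat_def ..
  also have "\<dots> = (\<Sum>c<d + 2. lifted_mat a d I i h $$ (d + 1, c) * cofactor (lifted_mat a d I i h) (d + 1) c)"
    by (rule laplace_expansion_row) (auto simp: lifted_mat_def)
  also have "\<dots> = (\<Sum>c<d + 2. h ((sorted_list_of_set I @ [i]) ! c)
                       * cofactor (lifted_mat a d I i (\<lambda>_. 0)) (d + 1) c)"
  proof (rule sum.cong[OF refl])
    fix c assume c: "c \<in> {..<d + 2}"
    have "mat_delete (lifted_mat a d I i h) (d + 1) c = mat_delete (lifted_mat a d I i (\<lambda>_. 0)) (d + 1) c"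
      by (rule eq_matI) (auto simp: mat_delete_def lifted_mat_def Ahmat_def)
    then show "lifted_mat a d I i h $$ (d + 1, c) * cofactor (lifted_mat a d I i h) (d + 1) c
             = h ((sorted_list_of_set I @ [i]) ! c) * cofactor (lifted_mat a d I i (\<lambda>_. 0)) (d + 1) c"
      using c by (simp add: cofactor_def lifted_mat_def Ahmat_def)
  qed
  finally show ?thesis .
qed

definition cofactor_vec :: "(nat \<Rightarrow> nat \<Rightarrow> int) \<Rightarrow> nat \<Rightarrow> nat \<Rightarrow> nat set \<Rightarrow> nat \<Rightarrow> nat \<Rightarrow> real" where
  "cofactor_vec a n d I i j =
     (if j < n then (\<Sum>c<d + 2. if (sorted_list_of_set I @ [i]) ! c = j
                      then cofactor (lifted_mat a d I i (\<lambda>_. 0)) (d + 1) c else 0) else 0)"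

lemma ip_cofactor_vec:
  assumes I: "I \<subseteq> {0..<n}" "card I = d + 1" and i: "i < n"
  shows "ip n (cofactor_vec a n d I i) h = dIi a d I i h"
proof -
  let ?col = "sorted_list_of_set I @ [i]"
  let ?cof = "cofactor (lifted_mat a d I i (\<lambda>_. 0)) (d + 1)"
  have "finite I" using I(1) finite_subset by blast
  then have col: "?col ! c < n" if "c < d + 2" for c
    using lifted_column(1)[OF _ I(2) that, of i] I(1) i by auto
  have "ip n (cofactor_vec a n d I i) h = (\<Sum>j<n. \<Sum>c<d + 2. (if ?col ! c = j then ?cof c else 0) * h j)"
    unfolding ip_def cofactor_vec_def
    by (intro sum.cong refl) (simp add: sum_distrib_right del: add_2_eq_Suc')
  also have "\<dots> = (\<Sum>c<d + 2. \<Sum>j<n. (if ?col ! c = j then ?cof c else 0) * h j)"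
    by (rule sum.swap)
  also have "\<dots> = (\<Sum>c<d + 2. ?cof c * h (?col ! c))"
    by (intro sum.cong refl) (simp add: col if_distrib[of "\<lambda>x. x * _"] sum.delta' cong: if_cong)
  finally show ?thesis by (simp add: dIi_laplace_last_row mult.commute)
qed

lemma mIi_eq_cofactor_vec:
  assumes "I \<subseteq> {0..<n}" "card I = d + 1" "i < n"
  shows "mIi a n d I i = cofactor_vec a n d I i"
  by (rule mIi_eqI) (simp add: in_Rn_def cofactor_vec_def, simp add: ip_cofactor_vec[OF assms])

lemma ip_mIi:
  assumes "I \<subseteq> {0..<n}" "card I = d + 1" "i < n"
  shows "ip n (mIi a n d I i) h = dIi a d I i h"
  by (simp add: mIi_eq_cofactor_vec[OF assms] ip_cofactor_vec[OF assms])

lemma mIi_vanishes: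
  assumes I: "I \<subseteq> {0..<n}" "card I = d + 1" and i: "i < n" and j: "j \<notin> I" "j \<noteq> i"
  shows "mIi a n d I i j = 0"
proof -
  have "finite I" using I(1) finite_subset by blast
  then have "(sorted_list_of_set I @ [i]) ! c \<noteq> j" if "c < d + 2" for c
    using lifted_column(1)[OF _ I(2) that] j by blast
  then show ?thesis
    by (simp add: mIi_eq_cofactor_vec[OF I i] cofactor_vec_def del: add_2_eq_Suc')
qed

lemma mIi_at_i:
  assumes I: "I \<subseteq> {0..<n}" "card I = d + 1" and i: "i < n" "i \<notin> I"
  shows "mIi a n d I i i = dI a d I"
proof -
  let ?col = "sorted_list_of_set I @ [i]"
  let ?M = "lifted_mat a d I i (\<lambda>_. 0)"
  have "finite I" using I(1) finite_subset by blast
  then have "(?col ! c = i) = (c = d + 1)" if "c < d + 2" for c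
    using lifted_column(2)[OF _ I(2) that] i by blast
  then have "mIi a n d I i i = cofactor ?M (d + 1) (d + 1)"
    by (simp add: mIi_eq_cofactor_vec[OF I i(1)] cofactor_vec_def i(1) if_distrib cong: if_cong
        del: add_2_eq_Suc')
  also have "\<dots> = det (simplex_mat a d I)"
  proof -
    have "mat_delete ?M (d + 1) (d + 1) = simplex_mat a d I"
      using I(2) by (intro eq_matI) (auto simp: mat_delete_def lifted_mat_def simplex_mat_def Ahmat_def nth_append)
    moreover have "(-1 :: real) ^ (d + 1 + (d + 1)) = 1"
      by (simp flip: mult_2)
    ultimately show ?thesis by (simp add: cofactor_def)
  qed
  finally show ?thesis by (simp add: dI_def simplex_mat_def)
qed

text \<open>The matrix of this determinant repeats row r of A as its last row.\<close>
lemma ip_mIi_Amat: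
  assumes I: "I \<subseteq> {0..<n}" "card I = d + 1" and i: "i < n" and r: "r \<le> d"
  shows "ip n (mIi a n d I i) (Amat a r) = 0"
proof -
  let ?M = "lifted_mat a d I i (Amat a r)"
  have "ip n (mIi a n d I i) (Amat a r) = det ?M"
    by (simp add: ip_mIi[OF I i] dIi_def lifted_mat_def)
  also have "\<dots> = 0"
  proof (rule det_identical_rows[of _ "d + 2" r "d + 1"])
    show "row ?M r = row ?M (d + 1)"
      using r by (intro eq_vecI) (auto simp: lifted_mat_def Ahmat_def)
  qed (use r in \<open>auto simp: lifted_mat_def\<close>)
  finally show ?thesis .
qed

lemma ip_mIi_affine_at:
  assumes "I \<subseteq> {0..<n}" "card I = d + 1" "i < n"
  shows "ip n (mIi a n d I i) (affine_at a d l) = 0"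
proof -
  have "ip n (mIi a n d I i) (affine_at a d l) = (\<Sum>r<d + 1. l r * ip n (mIi a n d I i) (Amat a r))"
    unfolding ip_def affine_at_def
    by (simp add: sum_distrib_left sum.swap[of _ "{..<n}"] algebra_simps)
  also have "\<dots> = 0"
    using ip_mIi_Amat[OF assms] by simp
  finally show ?thesis .
qed

lemma ip_mIi_vanishing_on:
  assumes I: "I \<subseteq> {0..<n}" "card I = d + 1" and i: "i < n" "i \<notin> I" and g: "\<forall>j\<in>I. g j = 0"
  shows "ip n (mIi a n d I i) g = dI a d I * g i"
proof -
  have "ip n (mIi a n d I i) g = (\<Sum>j<n. if j = i then dI a d I * g i else 0)"
    unfolding ip_def
  proof (intro sum.cong refl)
    fix j
    show "mIi a n d I i j * g j = (if j = i then dI a d I * g i else 0)"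
      using mIi_vanishes[OF I i(1), of j] mIi_at_i[OF I i] g by (cases "j \<in> I") auto
  qed
  then show ?thesis using i by simp
qed

lemma ip_dI_mIi_interpolant:
  assumes I: "I \<subseteq> {0..<n}" "card I = d + 1" and i: "i < n" "i \<notin> I"
    and l: "\<forall>j\<in>I. h j = affine_at a d l j"
  shows "ip n (\<lambda>j. dI a d I * mIi a n d I i j) h = dI a d I * dI a d I * (h i - affine_at a d l i)"
proof -
  let ?m = "mIi a n d I i"
  have "ip n ?m h = ip n ?m (\<lambda>j. h j - affine_at a d l j) + ip n ?m (affine_at a d l)"
    using ip_diff_right[of n ?m h "affine_at a d l"] by simp
  also have "\<dots> = dI a d I * (h i - affine_at a d l i)"
    using ip_mIi_vanishing_on[OF I i, of "\<lambda>j. h j - affine_at a d l j"] ip_mIi_affine_at[OF I i(1), of a l] l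
    by simp
  finally show ?thesis
    by (simp add: ip_scale_left)
qed

subsection \<open>Simplices\<close>

lemma aff_indep_rowsD:
  assumes "aff_indep a d I" "\<forall>r\<le>d. (\<Sum>j\<in>I. c j * Amat a r j) = 0"
  shows "\<forall>j\<in>I. c j = 0"
proof -
  have "(\<Sum>j\<in>I. c j) = 0" using assms(2) by (auto simp: Amat_def)
  moreover have "\<forall>r<d. (\<Sum>j\<in>I. c j * real_of_int (a j r)) = 0"
  proof (intro allI impI)
    fix r assume "r < d"
    then show "(\<Sum>j\<in>I. c j * real_of_int (a j r)) = 0"
      using assms(2)[rule_format, of "Suc r"] by (simp add: Amat_def)
  qed
  ultimately show ?thesis using assms(1) unfolding aff_indep_def by blast
qed

lemma aff_indep_columns:
  assumes S: "is_simplex a n d I"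
    and w: "\<forall>r\<le>d. (\<Sum>c<d + 1. w c * Amat a r (sorted_list_of_set I ! c)) = 0"
  shows "\<forall>c<d + 1. w c = 0"
proof -
  let ?s = "sorted_list_of_set I"
  have "finite I" using S finite_subset by (auto simp: is_simplex_def)
  then have bij: "bij_betw ((!) ?s) {..<d + 1} I"
    using S by (intro bij_betw_nth) (auto simp: is_simplex_def)
  define u where "u = w \<circ> inv_into {..<d + 1} ((!) ?s)"
  have u: "u (?s ! c) = w c" if "c < d + 1" for c
    using bij that by (simp add: u_def bij_betw_inv_into_left)
  have "\<forall>r\<le>d. (\<Sum>j\<in>I. u j * Amat a r j) = 0"
    using w by (simp add: sum.reindex_bij_betw[OF bij, symmetric] u)
  then have "\<forall>j\<in>I. u j = 0"
    using S by (intro aff_indep_rowsD) (auto simp: is_simplex_def)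
  then show ?thesis
    using u bij_betwE[OF bij] by auto
qed

lemma simplex_det_nonzero:
  assumes S: "is_simplex a n d I"
  shows "dI a d I \<noteq> 0"
proof
  have M: "simplex_mat a d I \<in> carrier_mat (d + 1) (d + 1)" by (simp add: simplex_mat_def)
  assume "dI a d I = 0"
  then obtain v where v: "v \<in> carrier_vec (d + 1)" "v \<noteq> 0\<^sub>v (d + 1)" "simplex_mat a d I *\<^sub>v v = 0\<^sub>v (d + 1)"
    using det_0_iff_vec_prod_zero_field[OF M] by (auto simp: dI_def simplex_mat_def)
  have "(\<Sum>c<d + 1. v $ c * Amat a r (sorted_list_of_set I ! c)) = (simplex_mat a d I *\<^sub>v v) $ r"
    if "r \<le> d" for r
    using that v(1) by (auto simp: simplex_mat_def scalar_prod_def mult.commute atLeast0LessThan intro!: sum.cong)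
  then have "\<forall>c<d + 1. v $ c = 0"
    using v(3) by (intro aff_indep_columns[OF S]) simp
  then have "v = 0\<^sub>v (d + 1)"
    using v(1) by (intro eq_vecI) auto
  with v(2) show False ..
qed

lemma simplex_interpolation:
  assumes S: "is_simplex a n d I"
  obtains l where "\<forall>j\<in>I. h j = affine_at a d l j"
proof -
  let ?s = "sorted_list_of_set I"
  let ?N = "transpose_mat (simplex_mat a d I)"
  have fin: "finite I" and card: "card I = d + 1"
    using S finite_subset by (auto simp: is_simplex_def)
  have M: "simplex_mat a d I \<in> carrier_mat (d + 1) (d + 1)" by (simp add: simplex_mat_def)
  then have N: "?N \<in> carrier_mat (d + 1) (d + 1)" by simp
  have "det ?N \<noteq> 0"
    unfolding det_transpose[OF M] using simplex_det_nonzero[OF S] by (simp add: dI_def simplex_mat_def)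
  then obtain B where B: "B \<in> carrier_mat (d + 1) (d + 1)" "?N * B = 1\<^sub>m (d + 1)"
    using det_non_zero_imp_unit[OF N] by (auto simp: Units_def ring_mat_def)
  define hv where "hv = vec (d + 1) (\<lambda>c. h (?s ! c))"
  have hv: "hv \<in> carrier_vec (d + 1)" by (simp add: hv_def)
  have sol: "?N *\<^sub>v (B *\<^sub>v hv) = hv"
    using N B hv by (simp add: assoc_mult_mat_vec[symmetric, of _ "d + 1" "d + 1"])
  show ?thesis
  proof (rule that, intro ballI)
    fix j assume "j \<in> I"
    then obtain c where c: "c < d + 1" "j = ?s ! c"
      using fin card by (metis in_set_conv_nth length_sorted_list_of_set set_sorted_list_of_set)
    have "h j = (?N *\<^sub>v (B *\<^sub>v hv)) $ c" using sol c by (simp add: hv_def)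
    also have "\<dots> = affine_at a d (\<lambda>r. (B *\<^sub>v hv) $ r) j"
      using c B by (auto simp: affine_at_def simplex_mat_def scalar_prod_def atLeast0LessThan mult.commute
          intro!: sum.cong)
    finally show "h j = affine_at a d (\<lambda>r. (B *\<^sub>v hv) $ r) j" .
  qed
qed

subsection \<open>Cells of regular subdivisions\<close>

lemma argmin_eq_iff_level_set:
  fixes F :: "nat \<Rightarrow> real"
  assumes "I \<subseteq> {0..<n}" "I \<noteq> {}"
  shows "I = {j. j < n \<and> (\<forall>k<n. F j \<le> F k)}
     \<longleftrightarrow> (\<exists>\<mu>. (\<forall>j\<in>I. F j = \<mu>) \<and> (\<forall>i\<in>{0..<n} - I. \<mu> < F i))"
proof
  assume I: "I = {j. j < n \<and> (\<forall>k<n. F j \<le> F k)}"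
  obtain j0 where "j0 \<in> I" using assms(2) by blast
  then have j0: "j0 < n" "\<forall>k<n. F j0 \<le> F k" using I by auto
  have "F j = F j0" if "j \<in> I" for j
  proof -
    have "j < n" "\<forall>k<n. F j \<le> F k" using that I by auto
    with j0 show ?thesis by (meson order.antisym)
  qed
  moreover have "F j0 < F i" if "i \<in> {0..<n} - I" for i
  proof -
    have "\<not> (\<forall>k<n. F i \<le> F k)" using that I by auto
    then obtain k where "k < n" "F k < F i" by (auto simp: not_le)
    with j0 show ?thesis by force
  qed
  ultimately show "\<exists>\<mu>. (\<forall>j\<in>I. F j = \<mu>) \<and> (\<forall>i\<in>{0..<n} - I. \<mu> < F i)"
    by blast
next
  assume "\<exists>\<mu>. (\<forall>j\<in>I. F j = \<mu>) \<and> (\<forall>i\<in>{0..<n} - I. \<mu> < F i)"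
  then obtain \<mu> where \<mu>: "\<forall>j\<in>I. F j = \<mu>" "\<forall>i\<in>{0..<n} - I. \<mu> < F i" by blast
  have low: "F j \<le> F k" if "j \<in> I" "k < n" for j k
    using \<mu> that by (cases "k \<in> I") force+
  obtain j0 where "j0 \<in> I" using assms(2) by blast
  have "j \<in> I" if "j < n" "\<forall>k<n. F j \<le> F k" for j
  proof (rule ccontr)
    assume "j \<notin> I"
    then have "F j0 < F j" using \<mu> that(1) \<open>j0 \<in> I\<close> by auto
    moreover have "F j \<le> F j0" using that assms(1) \<open>j0 \<in> I\<close> by auto
    ultimately show False by simp
  qed
  then show "I = {j. j < n \<and> (\<forall>k<n. F j \<le> F k)}"
    using low assms(1) by auto
qed

lemma reg_subdiv_iff_affine_below:
  assumes "I \<subseteq> {0..<n}" "I \<noteq> {}"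
  shows "I \<in> reg_subdiv a n d h \<longleftrightarrow>
    (\<exists>l. (\<forall>j\<in>I. h j = affine_at a d l j) \<and> (\<forall>i\<in>{0..<n} - I. affine_at a d l i < h i))"
proof
  assume "I \<in> reg_subdiv a n d h"
  then obtain c t where t: "t > 0" and cell: "I = {j. j < n \<and> (\<forall>k<n.
      (\<Sum>r<d. c r * real_of_int (a j r)) + t * h j \<le> (\<Sum>r<d. c r * real_of_int (a k r)) + t * h k)}"
    unfolding reg_subdiv_def by blast
  define S where "S j = (\<Sum>r<d. c r * real_of_int (a j r))" for j
  obtain \<mu> where \<mu>: "\<forall>j\<in>I. S j + t * h j = \<mu>" "\<forall>i\<in>{0..<n} - I. \<mu> < S i + t * h i"
    using argmin_eq_iff_level_set[OF assms, of "\<lambda>j. S j + t * h j"] cell unfolding S_def by blast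
  define l where "l r = (if r = 0 then \<mu> else - c (r - 1)) / t" for r
  have "(\<Sum>r<d. l (Suc r) * real_of_int (a j r)) = - S j / t" for j
    by (simp add: l_def S_def sum_divide_distrib sum_negf)
  then have diff: "h j - affine_at a d l j = (S j + t * h j - \<mu>) / t" for j
    using t by (simp add: affine_at_eq l_def field_simps)
  have "h j = affine_at a d l j" if "j \<in> I" for j
    using diff[of j] \<mu>(1) that by simp
  moreover have "affine_at a d l i < h i" if "i \<in> {0..<n} - I" for i
  proof -
    have "0 < (S i + t * h i - \<mu>) / t" using \<mu>(2) that t by simp
    with diff[of i] show ?thesis by linarith
  qed
  ultimately show "\<exists>l. (\<forall>j\<in>I. h j = affine_at a d l j) \<and> (\<forall>i\<in>{0..<n} - I. affine_at a d l i < h i)"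
    by blast
next
  assume "\<exists>l. (\<forall>j\<in>I. h j = affine_at a d l j) \<and> (\<forall>i\<in>{0..<n} - I. affine_at a d l i < h i)"
  then obtain l where l: "\<forall>j\<in>I. h j = affine_at a d l j" "\<forall>i\<in>{0..<n} - I. affine_at a d l i < h i"
    by blast
  define c where "c r = - l (Suc r)" for r
  have F: "(\<Sum>r<d. c r * real_of_int (a j r)) + 1 * h j = h j - affine_at a d l j + l 0" for j
    by (simp add: affine_at_eq c_def sum_negf)
  have "I = {j. j < n \<and> (\<forall>k<n. h j - affine_at a d l j + l 0 \<le> h k - affine_at a d l k + l 0)}"
    using l by (subst argmin_eq_iff_level_set[OF assms]) (intro exI[of _ "l 0"], auto)
  then show "I \<in> reg_subdiv a n d h"
    unfolding reg_subdiv_def F[symmetric] by (intro CollectI exI[of _ c] exI[of _ "1::real"]) simp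
qed

lemma simplex_in_reg_subdiv_iff:
  assumes S: "is_simplex a n d I"
  shows "I \<in> reg_subdiv a n d h
     \<longleftrightarrow> (\<forall>i\<in>{0..<n} - I. ip n (\<lambda>j. dI a d I * mIi a n d I i j) h > 0)"
proof -
  have I: "I \<subseteq> {0..<n}" "card I = d + 1" using S by (auto simp: is_simplex_def)
  then have "I \<noteq> {}" by auto
  have sq: "dI a d I * dI a d I > 0"
    using simplex_det_nonzero[OF S] not_real_square_gt_zero by blast
  have pos_iff: "ip n (\<lambda>j. dI a d I * mIi a n d I i j) h > 0 \<longleftrightarrow> affine_at a d l i < h i"
    if "\<forall>j\<in>I. h j = affine_at a d l j" "i \<in> {0..<n} - I" for l i
    using ip_dI_mIi_interpolant[OF I _ _ that(1)] that(2) sq by (simp add: zero_less_mult_iff)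
  obtain l where "\<forall>j\<in>I. h j = affine_at a d l j"
    using simplex_interpolation[OF S] .
  then show ?thesis
    unfolding reg_subdiv_iff_affine_below[OF I(1) \<open>I \<noteq> {}\<close>] using pos_iff by blast
qed

subsection \<open>The kernel of A\<close>

lemma kerA_sum:
  "finite K \<Longrightarrow> (\<And>k. k \<in> K \<Longrightarrow> f k \<in> kerA a n d) \<Longrightarrow> (\<lambda>j. \<Sum>k\<in>K. f k j) \<in> kerA a n d"
  by (auto simp: kerA_def in_Rn_def sum_distrib_left sum.swap[of _ K])

lemma kerA_scale: "x \<in> kerA a n d \<Longrightarrow> (\<lambda>j. c * x j) \<in> kerA a n d"
  by (auto simp: kerA_def in_Rn_def sum_distrib_left[symmetric] mult.left_commute)

lemma kerA_diff: "x \<in> kerA a n d \<Longrightarrow> y \<in> kerA a n d \<Longrightarrow> (\<lambda>j. x j - y j) \<in> kerA a n d"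
  by (auto simp: kerA_def in_Rn_def right_diff_distrib sum_subtractf)

lemma mIi_in_kerA:
  assumes "I \<subseteq> {0..<n}" "card I = d + 1" "i < n"
  shows "mIi a n d I i \<in> kerA a n d"
proof -
  have "mIi a n d I i j = 0" if "n \<le> j" for j
    using assms(1,3) that by (intro mIi_vanishes[OF assms]) auto
  then show ?thesis
    using ip_mIi_Amat[OF assms] by (auto simp: kerA_def in_Rn_def ip_def mult.commute)
qed

lemma kerA_supported_on_aff_indep:
  assumes "aff_indep a d I" "I \<subseteq> {0..<n}" "x \<in> kerA a n d" "\<forall>j. j \<notin> I \<longrightarrow> x j = 0"
  shows "x = (\<lambda>_. 0)"
proof -
  have "(\<Sum>j\<in>I. x j * Amat a r j) = (\<Sum>j<n. Amat a r j * x j)" for r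
    using assms(2,4) by (intro sum.mono_neutral_cong_left) (auto simp: mult.commute)
  then have "\<forall>j\<in>I. x j = 0"
    using assms(3) by (intro aff_indep_rowsD[OF assms(1)]) (simp add: kerA_def)
  with assms(4) show ?thesis by auto
qed

lemma kerA_expansion:
  assumes S: "is_simplex a n d I" and x: "x \<in> kerA a n d"
  shows "x = (\<lambda>j. \<Sum>i\<in>{0..<n} - I. x i / dI a d I * mIi a n d I i j)" (is "x = ?x'")
proof -
  have I: "I \<subseteq> {0..<n}" "card I = d + 1" and ai: "aff_indep a d I"
    using S by (auto simp: is_simplex_def)
  have D: "dI a d I \<noteq> 0" by (rule simplex_det_nonzero[OF S])
  have x': "?x' \<in> kerA a n d"
    using mIi_in_kerA[OF I] by (intro kerA_sum kerA_scale) auto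
  have "?x' j = x j" if j: "j \<notin> I" for j
  proof (cases "j < n")
    case True
    have "?x' j = (\<Sum>i\<in>{0..<n} - I. if i = j then x j else 0)"
      using mIi_vanishes[OF I _ j] mIi_at_i[OF I _ j] True D by (intro sum.cong refl) auto
    then show ?thesis using True j by simp
  next
    case False
    then show ?thesis
      using x mIi_vanishes[OF I _ j] by (simp add: kerA_def in_Rn_def)
  qed
  then have "(\<lambda>j. x j - ?x' j) = (\<lambda>_. 0)"
    by (intro kerA_supported_on_aff_indep[OF ai I(1) kerA_diff[OF x x']]) simp
  then show ?thesis by (metis eq_iff_diff_eq_0)
qed

lemma kerA_eq_span:
  assumes "0 < p" and S: "\<forall>k<p. is_simplex a n d (I k)"
  shows "{x. \<exists>c :: nat \<Rightarrow> nat \<Rightarrow> real. x = (\<lambda>j. \<Sum>k<p. \<Sum>i\<in>{0..<n} - I k.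
             c k i * (dI a d (I k) * mIi a n d (I k) i j))} = kerA a n d"
proof (intro equalityI subsetI; clarsimp)
  fix c :: "nat \<Rightarrow> nat \<Rightarrow> real"
  have "I k \<subseteq> {0..<n}" "card (I k) = d + 1" if "k < p" for k
    using S that by (auto simp: is_simplex_def)
  then show "(\<lambda>j. \<Sum>k<p. \<Sum>i\<in>{0..<n} - I k. c k i * (dI a d (I k) * mIi a n d (I k) i j)) \<in> kerA a n d"
    using mIi_in_kerA by (intro kerA_sum kerA_scale) auto
next
  fix x assume x: "x \<in> kerA a n d"
  let ?D = "dI a d (I 0)"
  have "?D \<noteq> 0" using simplex_det_nonzero S \<open>0 < p\<close> by blast
  define c where "c k i = (if k = 0 then x i / (?D * ?D) else 0)" for k i :: nat
  have "(\<Sum>i\<in>{0..<n} - I k. c k i * (dI a d (I k) * mIi a n d (I k) i j))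
      = (if k = 0 then \<Sum>i\<in>{0..<n} - I 0. x i / ?D * mIi a n d (I 0) i j else 0)" for k j :: nat
    using \<open>?D \<noteq> 0\<close> by (cases "k = 0") (simp_all add: c_def)
  then have "x = (\<lambda>j. \<Sum>k<p. \<Sum>i\<in>{0..<n} - I k. c k i * (dI a d (I k) * mIi a n d (I k) i j))"
    using kerA_expansion[OF S[rule_format, OF \<open>0 < p\<close>] x] \<open>0 < p\<close> by simp
  then show "\<exists>c. x = (\<lambda>j. \<Sum>k<p. \<Sum>i\<in>{0..<n} - I k. c k i * (dI a d (I k) * mIi a n d (I k) i j))"
    by blast
qed

theorem lemma2p2:
  fixes a :: "nat \<Rightarrow> nat \<Rightarrow> int" and n d p :: nat and I :: "nat \<Rightarrow> nat set"
  assumes "n \<ge> d + 2"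
    and "\<forall>j<n. \<forall>k<n. j \<noteq> k \<longrightarrow> (\<exists>r<d. a j r \<noteq> a k r)"
    and "full_dim a n d"
    and "p \<ge> 1"
    and "\<forall>k<p. is_simplex a n d (I k)"
    and "\<exists>h. \<forall>k<p. I k \<in> reg_subdiv a n d h"
  shows "{h. in_Rn n h \<and> (\<forall>k<p. I k \<in> reg_subdiv a n d h)} \<noteq> {}
       \<and> {h. in_Rn n h \<and> (\<forall>k<p. I k \<in> reg_subdiv a n d h)}
         = {h. in_Rn n h \<and> (\<forall>k<p. \<forall>i\<in>{0..<n} - I k.
                 ip n (\<lambda>j. dI a d (I k) * mIi a n d (I k) i j) h > 0)}
       \<and> {x. \<exists>c :: nat \<Rightarrow> nat \<Rightarrow> real. x = (\<lambda>j. \<Sum>k<p. \<Sum>i\<in>{0..<n} - I k.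
                 c k i * (dI a d (I k) * mIi a n d (I k) i j))}
         = kerA a n d"
proof -
  obtain h where "\<forall>k<p. I k \<in> reg_subdiv a n d h" using assms(6) ..
  then have witness: "(\<lambda>j. if j < n then h j else 0) \<in> {h. in_Rn n h \<and> (\<forall>k<p. I k \<in> reg_subdiv a n d h)}"
    by (simp add: in_Rn_def reg_subdiv_truncate)
  have "0 < p" using assms(4) by simp
  show ?thesis
    using witness simplex_in_reg_subdiv_iff assms(5) kerA_eq_span[OF \<open>0 < p\<close> assms(5)]
    by (intro conjI) blast+
qed

end
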